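(* Let $(X,Y)$ be a minimal divider of a matroid $N$. Then ${\rm cl}(X)\cap {\rm cl}(Y)={\rm cl}(X)\cap {\rm cl}(Y-{\rm cl}(X))$.
   Context: A partition $(X,Y)$ of $E(N)$ is a vertical $k$-separation if $r(X)+r(Y)-r(N)\leq k-1$ and $\min\{r(X),r(Y)\}\geq k$; it is exact if $r(X)+r(Y)-r(N)=k-1$. A divider of $N$ is an exact vertical $k$-separation for some $k$. A divider $(X,Y)$ is minimal if there is no vertical $k'$-separation $(X',Y')$ of $N$ (for any $k'$) with ${\rm cl}(X')\cap {\rm cl}(Y')\subsetneqq {\rm cl}(X)\cap {\rm cl}(Y)$. *)

theory Defs
  imports Main
begin

definition matroid_rank :: "'a set \<Rightarrow> ('a set \<Rightarrow> nat) \<Rightarrow> bool" where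
  "matroid_rank E r \<longleftrightarrow> finite E
     \<and> (\<forall>X. X \<subseteq> E \<longrightarrow> r X \<le> card X)
     \<and> (\<forall>X Y. X \<subseteq> Y \<and> Y \<subseteq> E \<longrightarrow> r X \<le> r Y)
     \<and> (\<forall>X Y. X \<subseteq> E \<and> Y \<subseteq> E \<longrightarrow> r (X \<union> Y) + r (X \<inter> Y) \<le> r X + r Y)"

definition mcl :: "'a set \<Rightarrow> ('a set \<Rightarrow> nat) \<Rightarrow> 'a set \<Rightarrow> 'a set" where
  "mcl E r X = {e \<in> E. r (insert e X) = r X}"

definition vertical_sep :: "'a set \<Rightarrow> ('a set \<Rightarrow> nat) \<Rightarrow> nat \<Rightarrow> 'a set \<Rightarrow> 'a set \<Rightarrow> bool" where
  "vertical_sep E r k X Y \<longleftrightarrow> X \<union> Y = E \<and> X \<inter> Y = {}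
     \<and> int (r X) + int (r Y) - int (r E) \<le> int k - 1
     \<and> min (r X) (r Y) \<ge> k"

definition exact_vertical_sep :: "'a set \<Rightarrow> ('a set \<Rightarrow> nat) \<Rightarrow> nat \<Rightarrow> 'a set \<Rightarrow> 'a set \<Rightarrow> bool" where
  "exact_vertical_sep E r k X Y \<longleftrightarrow> vertical_sep E r k X Y
     \<and> int (r X) + int (r Y) - int (r E) = int k - 1"

definition divider :: "'a set \<Rightarrow> ('a set \<Rightarrow> nat) \<Rightarrow> 'a set \<Rightarrow> 'a set \<Rightarrow> bool" where
  "divider E r X Y \<longleftrightarrow> (\<exists>k. exact_vertical_sep E r k X Y)"

definition minimal_divider :: "'a set \<Rightarrow> ('a set \<Rightarrow> nat) \<Rightarrow> 'a set \<Rightarrow> 'a set \<Rightarrow> bool" where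
  "minimal_divider E r X Y \<longleftrightarrow> divider E r X Y
     \<and> \<not> (\<exists>k' X' Y'. vertical_sep E r k' X' Y'
            \<and> mcl E r X' \<inter> mcl E r Y' \<subset> mcl E r X \<inter> mcl E r Y)"

end

theory Submission
  imports Defs
begin

text \<open>Replacing \<open>X\<close> by \<open>cl(X)\<close> and \<open>Y\<close> by \<open>Y - cl(X)\<close> keeps the rank of the first
  side and does not increase the rank of the second, so the new partition is again a vertical
  separation (of order \<open>r(cl X) + r(Y - cl X) - r(E) + 1\<close>, at most \<open>k\<close>). Its guts
  \<open>cl(X) \<inter> cl(Y - cl X)\<close> lie inside \<open>cl(X) \<inter> cl(Y)\<close>, so minimality of \<open>(X, Y)\<close> forces
  equality.\<close>

context
  fixes E :: "'a set" and r :: "'a set \<Rightarrow> nat"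
  assumes M: "matroid_rank E r"
begin

lemma rank_mono: "A \<subseteq> B \<Longrightarrow> B \<subseteq> E \<Longrightarrow> r A \<le> r B"
  using M unfolding matroid_rank_def by blast

lemma rank_submod: "A \<subseteq> E \<Longrightarrow> B \<subseteq> E \<Longrightarrow> r (A \<union> B) + r (A \<inter> B) \<le> r A + r B"
  using M unfolding matroid_rank_def by blast

lemma rank_Un_le: "A \<subseteq> E \<Longrightarrow> B \<subseteq> E \<Longrightarrow> r (A \<union> B) \<le> r A + r B"
  using rank_submod[of A B] by linarith

lemma mcl_subset: "mcl E r A \<subseteq> E"
  unfolding mcl_def by auto

lemma subset_mcl: "A \<subseteq> E \<Longrightarrow> A \<subseteq> mcl E r A"
  unfolding mcl_def by (auto simp: insert_absorb)

lemma mcl_mono: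
  assumes "A \<subseteq> B" "B \<subseteq> E"
  shows "mcl E r A \<subseteq> mcl E r B"
proof
  fix e assume "e \<in> mcl E r A"
  then have e: "e \<in> E" and rA: "r (insert e A) = r A"
    unfolding mcl_def by simp_all
  have "insert e A \<union> B = insert e B"
    using assms by blast
  then have "r (insert e B) + r (insert e A \<inter> B) \<le> r (insert e A) + r B"
    using rank_submod[of "insert e A" B] assms e by simp
  moreover have "r A \<le> r (insert e A \<inter> B)"
    using rank_mono[of A "insert e A \<inter> B"] assms by blast
  moreover have "r B \<le> r (insert e B)"
    using rank_mono[of B "insert e B"] assms e by blast
  ultimately have "r (insert e B) = r B"
    using rA by linarith
  with e show "e \<in> mcl E r B"
    unfolding mcl_def by simp
qed

lemma rank_Un_subset_mcl:
  assumes "A \<subseteq> E" "finite S" "S \<subseteq> mcl E r A"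
  shows "r (A \<union> S) = r A"
  using assms(2,3)
proof (induction S rule: finite_induct)
  case empty
  then show ?case by simp
next
  case (insert e S)
  then have "A \<union> S \<subseteq> E"
    using assms(1) mcl_subset[of A] by blast
  with insert.prems have "e \<in> mcl E r (A \<union> S)"
    using mcl_mono[of A "A \<union> S"] by blast
  then have "r (insert e (A \<union> S)) = r (A \<union> S)"
    unfolding mcl_def by simp
  with insert show ?case by simp
qed

lemma rank_mcl:
  assumes "A \<subseteq> E"
  shows "r (mcl E r A) = r A"
proof -
  have "finite (mcl E r A)"
    using M mcl_subset[of A] finite_subset unfolding matroid_rank_def by auto
  then have "r (A \<union> mcl E r A) = r A"
    using rank_Un_subset_mcl assms by blast
  moreover have "A \<union> mcl E r A = mcl E r A"
    using subset_mcl[OF assms] by blast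
  ultimately show ?thesis by simp
qed

lemma mcl_mcl:
  assumes "A \<subseteq> E"
  shows "mcl E r (mcl E r A) = mcl E r A"
proof
  show "mcl E r A \<subseteq> mcl E r (mcl E r A)"
    by (rule subset_mcl[OF mcl_subset])
  show "mcl E r (mcl E r A) \<subseteq> mcl E r A"
  proof
    fix e assume "e \<in> mcl E r (mcl E r A)"
    then have e: "e \<in> E" and "r (insert e (mcl E r A)) = r A"
      using rank_mcl[OF assms] unfolding mcl_def by simp_all
    moreover have "r (insert e A) \<le> r (insert e (mcl E r A))"
      using rank_mono[of "insert e A" "insert e (mcl E r A)"] subset_mcl[OF assms] mcl_subset[of A] e
      by (simp add: subset_insertI2)
    moreover have "r A \<le> r (insert e A)"
      using rank_mono[of A "insert e A"] assms e by (simp add: subset_insertI)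
    ultimately show "e \<in> mcl E r A"
      unfolding mcl_def by simp
  qed
qed

lemma divider_mcl_diff:
  assumes "vertical_sep E r k X Y"
  shows "divider E r (mcl E r X) (Y - mcl E r X)"
proof -
  let ?X' = "mcl E r X" and ?Y' = "Y - mcl E r X"
  have part: "X \<union> Y = E" "X \<inter> Y = {}"
    and sep: "int (r X) + int (r Y) - int (r E) \<le> int k - 1"
    and kX: "k \<le> r X" and kY: "k \<le> r Y"
    using assms unfolding vertical_sep_def by auto
  then have part': "?X' \<union> ?Y' = E" "?X' \<inter> ?Y' = {}"
    using subset_mcl[of X] mcl_subset[of X] by auto
  have "r ?X' = r X"
    using rank_mcl[of X] part by blast
  moreover have "r ?Y' \<le> r Y"
    using rank_mono[of ?Y' Y] part by blast
  moreover have "r E \<le> r ?X' + r ?Y'"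
    using rank_Un_le[of ?X' ?Y'] part'(1) by (metis Un_upper1 Un_upper2)
  ultimately have "exact_vertical_sep E r (r ?X' + r ?Y' + 1 - r E) ?X' ?Y'"
    using part' sep kX kY unfolding exact_vertical_sep_def vertical_sep_def by simp arith
  then show ?thesis
    unfolding divider_def by blast
qed

end

theorem lemma4p2:
  fixes E :: "'a set" and r :: "'a set \<Rightarrow> nat" and X Y :: "'a set"
  assumes "matroid_rank E r"
    and "minimal_divider E r X Y"
  shows "mcl E r X \<inter> mcl E r Y = mcl E r X \<inter> mcl E r (Y - mcl E r X)"
proof -
  obtain k where sep: "vertical_sep E r k X Y"
    and minimal: "\<And>k' X' Y'. vertical_sep E r k' X' Y' \<Longrightarrow>
      \<not> mcl E r X' \<inter> mcl E r Y' \<subset> mcl E r X \<inter> mcl E r Y"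
    using assms(2) unfolding minimal_divider_def divider_def exact_vertical_sep_def by blast
  then have "X \<subseteq> E" "Y \<subseteq> E"
    unfolding vertical_sep_def by auto
  obtain k' where "vertical_sep E r k' (mcl E r X) (Y - mcl E r X)"
    using divider_mcl_diff[OF assms(1) sep] unfolding divider_def exact_vertical_sep_def by blast
  then have "\<not> mcl E r X \<inter> mcl E r (Y - mcl E r X) \<subset> mcl E r X \<inter> mcl E r Y"
    using minimal mcl_mcl[OF assms(1) \<open>X \<subseteq> E\<close>] by fastforce
  moreover have "mcl E r (Y - mcl E r X) \<subseteq> mcl E r Y"
    using mcl_mono[OF assms(1), of "Y - mcl E r X" Y] \<open>Y \<subseteq> E\<close> by blast
  ultimately show ?thesis by blast
qed

end
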